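(* The set of modified ascent sequences equals the set of Cayley permutations avoiding the mesh patterns $\mathfrak{a}$ and $\mathfrak{b}$: $\mathrm{Modasc}=\mathrm{Cay}(\mathfrak{a},\mathfrak{b})$. Consequently $\{\mathfrak{a},\mathfrak{b}\}$ and $\{11,\mathfrak{f}\}$ are Wilf-equivalent over Cayley permutations, i.e. $|\mathrm{Cay}_n(\mathfrak{a},\mathfrak{b})|=|\mathrm{Cay}_n(11,\mathfrak{f})|$ for all $n$, where $\mathrm{Cay}_n(11,\mathfrak{f})$ is the set of Fishburn permutations of length $n$.
   Context: A Cayley permutation of length $n$ is a word $x=x(1)\cdots x(n)$ of positive integers in which every integer from $1$ to $\max(x)$ occurs; $\mathrm{Cay}_n$ is the set of these and $\mathrm{Cay}$ their union. Avoiding the pattern $11$ means having no repeated letter (i.e. being a permutation). Mesh patterns: a Cayley permutation $x$ contains $\mathfrak{a}$ if there are indices $i<j<n$ with $x(j)<x(i)=x(j+1)$. It contains $\mathfrak{b}$ if there is an index $i<n$ with $x(i)>x(i+1)$ and no index $m<i$ with $x(m)=x(i+1)$. $\mathrm{Cay}(\mathfrak{a},\mathfrak{b})$ is the set of Cayley permutations containing neither; $\mathrm{Cay}_n(\cdot)$ restricts to length $n$. Modified ascent sequences: $\mathrm{Modasc}_0=\{\text{empty word}\}$, $\mathrm{Modasc}_1=\{1\}$; for $n\ge2$, $x\in\mathrm{Modasc}_n$ iff there is $v\in\mathrm{Modasc}_{n-1}$ with last letter $b$ such that either $x=va$ with $1\le a\le b$, or $x=\tilde va$ with $b<a\le2+\mathrm{asc}(v)$,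 where $\mathrm{asc}(v)=|\{i:v(i)<v(i+1)\}|$ and $\tilde v$ is $v$ with every entry $c\ge a$ increased by one. $\mathrm{Modasc}=\bigcup_n\mathrm{Modasc}_n$. $\mathfrak{f}$ is the bivincular pattern $(231,\{1\},\{1\})$: a permutation $\pi$ contains it if there are indices $i$ and $k>i+1$ with $\pi(i)<\pi(i+1)$ and $\pi(k)=\pi(i)-1$. Permutations avoiding $\mathfrak{f}$ are the Fishburn permutations. *)

theory Defs
  imports Main
begin

(* Words are nat lists; positions are 0-indexed (x ! 0 is the paper's x(1)). *)

definition maxl :: "nat list \<Rightarrow> nat" where
  "maxl x = foldr max x 0"

definition is_cay :: "nat list \<Rightarrow> bool" where
  "is_cay x \<longleftrightarrow> set x = {1..maxl x}"

definition contains_a :: "nat list \<Rightarrow> bool" where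
  "contains_a x \<longleftrightarrow> (\<exists>i j. i < j \<and> Suc j < length x \<and> x ! j < x ! i \<and> x ! i = x ! Suc j)"

definition contains_b :: "nat list \<Rightarrow> bool" where
  "contains_b x \<longleftrightarrow> (\<exists>i. Suc i < length x \<and> x ! i > x ! Suc i \<and> (\<forall>m<i. x ! m \<noteq> x ! Suc i))"

(* bivincular pattern f = (231,{1},{1}) *)
definition contains_f :: "nat list \<Rightarrow> bool" where
  "contains_f p \<longleftrightarrow> (\<exists>i k. Suc i < k \<and> k < length p \<and> p ! i < p ! Suc i \<and> p ! k + 1 = p ! i)"

definition asc :: "nat list \<Rightarrow> nat" where
  "asc v = card {i. Suc i < length v \<and> v ! i < v ! Suc i}"

inductive modasc :: "nat list \<Rightarrow> bool" where
  empty: "modasc []"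
| one: "modasc [1]"
| app_le: "modasc v \<Longrightarrow> v \<noteq> [] \<Longrightarrow> 1 \<le> a \<Longrightarrow> a \<le> last v \<Longrightarrow> modasc (v @ [a])"
| app_gt: "modasc v \<Longrightarrow> v \<noteq> [] \<Longrightarrow> last v < a \<Longrightarrow> a \<le> 2 + asc v \<Longrightarrow>
           modasc (map (\<lambda>c. if a \<le> c then c + 1 else c) v @ [a])"

end

theory Submission
  imports Defs "HOL-Library.Multiset"
begin

(* A Cayley permutation avoids a and b exactly when its ascent tops are precisely the first
   occurrences of letters: a forbids ascending onto a repeated letter, b forbids descending onto a
   new one.  This property survives deleting the last letter (after closing the gap it may leave
   in the alphabet), and that deletion inverts the two rules generating modified ascent sequences,
   so both sets coincide by induction on the length.

   For the enumeration, modified ascent sequences (grown by appending a letter) and Fishburn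
   permutations (grown by inserting a new maximum at an active site) carry generating trees with
   the same rule (q, m) -> (1, m), ..., (q, m), (q + 1, m + 1), ..., (m, m + 1), labelling x by
   (last x, asc x + 2), resp. by (number of active sites left of the maximum, number of active
   sites).  Equal rules and equal roots force equal label distributions on every level. *)

section \<open>Ascent tops and first occurrences\<close>

definition ascent_tops_new :: "nat list \<Rightarrow> bool" where
  "ascent_tops_new x \<longleftrightarrow>
     (\<forall>i. Suc i < length x \<longrightarrow> (x!i < x!Suc i \<longleftrightarrow> x!Suc i \<notin> set (take (Suc i) x)))"

lemma ascent_tops_new_Nil [simp]: "ascent_tops_new []"
  and ascent_tops_new_single [simp]: "ascent_tops_new [a]"
  by (simp_all add: ascent_tops_new_def)

lemma ascent_tops_new_snoc:
  "ascent_tops_new (v @ [a]) \<longleftrightarrow> ascent_tops_new v \<and> (v \<noteq> [] \<longrightarrow> (last v < a \<longleftrightarrow> a \<notin> set v))"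
proof
  assume new: "ascent_tops_new (v @ [a])"
  have "ascent_tops_new v"
    unfolding ascent_tops_new_def
  proof (intro allI impI)
    fix i assume i: "Suc i < length v"
    have "(v @ [a])!i < (v @ [a])!Suc i \<longleftrightarrow> (v @ [a])!Suc i \<notin> set (take (Suc i) (v @ [a]))"
      using new i by (simp add: ascent_tops_new_def)
    then show "v!i < v!Suc i \<longleftrightarrow> v!Suc i \<notin> set (take (Suc i) v)"
      using i by (simp add: nth_append)
  qed
  moreover have "last v < a \<longleftrightarrow> a \<notin> set v" if "v \<noteq> []"
  proof -
    obtain i where i: "length v = Suc i" using \<open>v \<noteq> []\<close> by (cases v) auto
    have "(v @ [a])!i < (v @ [a])!Suc i \<longleftrightarrow> (v @ [a])!Suc i \<notin> set (take (Suc i) (v @ [a]))"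
      using new i by (simp add: ascent_tops_new_def)
    then show ?thesis using i \<open>v \<noteq> []\<close> by (simp add: nth_append last_conv_nth)
  qed
  ultimately show "ascent_tops_new v \<and> (v \<noteq> [] \<longrightarrow> (last v < a \<longleftrightarrow> a \<notin> set v))" by blast
next
  assume new: "ascent_tops_new v \<and> (v \<noteq> [] \<longrightarrow> (last v < a \<longleftrightarrow> a \<notin> set v))"
  show "ascent_tops_new (v @ [a])"
    unfolding ascent_tops_new_def
  proof (intro allI impI)
    fix i assume i: "Suc i < length (v @ [a])"
    show "(v @ [a])!i < (v @ [a])!Suc i \<longleftrightarrow> (v @ [a])!Suc i \<notin> set (take (Suc i) (v @ [a]))"
    proof (cases "Suc i < length v")
      case True
      then show ?thesis using new by (simp add: nth_append ascent_tops_new_def)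
    next
      case False
      then have "length v = Suc i" using i by simp
      then show ?thesis using new by (auto simp: nth_append last_conv_nth)
    qed
  qed
qed

lemma ascent_tops_new_imp_avoids:
  assumes new: "ascent_tops_new x"
  shows "\<not> contains_a x \<and> \<not> contains_b x"
proof
  show "\<not> contains_a x"
  proof
    assume "contains_a x"
    then obtain i j where ij: "i < j" "Suc j < length x" "x!j < x!i" "x!i = x!Suc j"
      unfolding contains_a_def by blast
    then have "x!Suc j \<notin> set (take (Suc j) x)"
      using new by (simp add: ascent_tops_new_def)
    then show False using ij by (auto simp: in_set_conv_nth)
  qed
  show "\<not> contains_b x"
  proof
    assume "contains_b x"
    then obtain i where i: "Suc i < length x" "x!Suc i < x!i" "\<forall>m<i. x!m \<noteq> x!Suc i"
      unfolding contains_b_def by blast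
    then have "x!Suc i \<in> set (take (Suc i) x)"
      using new by (auto simp: ascent_tops_new_def)
    then obtain m where "m \<le> i" "x!m = x!Suc i" by (auto simp: in_set_conv_nth less_Suc_eq_le)
    then show False using i by (cases "m = i") auto
  qed
qed

lemma avoids_imp_ascent_tops_new:
  assumes "\<not> contains_a x" "\<not> contains_b x"
  shows "ascent_tops_new x"
  unfolding ascent_tops_new_def
proof (intro allI impI)
  fix i assume i: "Suc i < length x"
  show "x!i < x!Suc i \<longleftrightarrow> x!Suc i \<notin> set (take (Suc i) x)"
  proof
    assume asc: "x!i < x!Suc i"
    show "x!Suc i \<notin> set (take (Suc i) x)"
    proof
      assume "x!Suc i \<in> set (take (Suc i) x)"
      then obtain m where "m \<le> i" "x!m = x!Suc i" by (auto simp: in_set_conv_nth less_Suc_eq_le)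
      with asc i have "contains_a x"
        unfolding contains_a_def by (intro exI[of _ m] exI[of _ i]) (auto simp: le_less)
      with assms show False by blast
    qed
  next
    assume fresh: "x!Suc i \<notin> set (take (Suc i) x)"
    then have "x!i \<noteq> x!Suc i" "\<forall>m<i. x!m \<noteq> x!Suc i"
      using i by (auto simp: in_set_conv_nth)
    with assms(2) i show "x!i < x!Suc i"
      unfolding contains_b_def by (meson linorder_neqE_nat)
  qed
qed

lemma ascent_tops_new_iff_avoids:
  "ascent_tops_new x \<longleftrightarrow> \<not> contains_a x \<and> \<not> contains_b x"
  using ascent_tops_new_imp_avoids avoids_imp_ascent_tops_new by blast

lemma maxl_eq_Max: "maxl x = Max (insert 0 (set x))"
  by (induction x) (simp_all add: maxl_def insert_commute)

lemma is_cay_iff_interval: "is_cay x \<longleftrightarrow> (\<exists>m. set x = {1..m})"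
proof
  assume "\<exists>m. set x = {1..m}"
  then obtain m where m: "set x = {1..m}" ..
  then have "maxl x = m" by (simp add: maxl_eq_Max) (rule Max_eqI; auto)
  with m show "is_cay x" by (simp add: is_cay_def)
qed (auto simp: is_cay_def)

lemma is_cay_single_iff [simp]: "is_cay [a] \<longleftrightarrow> a = 1"
  by (auto simp: is_cay_iff_interval) (metis atLeastAtMost_singleton_iff)

lemma is_cay_snoc_mem: "a \<in> set v \<Longrightarrow> is_cay (v @ [a]) \<longleftrightarrow> is_cay v"
  by (simp add: is_cay_iff_interval insert_absorb)

lemma finite_cay_length: "finite {x. is_cay x \<and> length x = n}"
proof (rule finite_subset)
  have "set x \<subseteq> {0..n}" if "is_cay x" "length x = n" for x
  proof -
    obtain m where m: "set x = {1..m}" using \<open>is_cay x\<close> by (auto simp: is_cay_iff_interval)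
    have "m = card (set x)" using m by simp
    also have "\<dots> \<le> n" using card_length[of x] \<open>length x = n\<close> by simp
    finally show ?thesis using m by auto
  qed
  then show "{x. is_cay x \<and> length x = n} \<subseteq> {x. set x \<subseteq> {0..n} \<and> length x = n}" by blast
qed (rule finite_lists_length_eq, simp)

lemma cay_distinct_iff: "is_cay x \<and> distinct x \<longleftrightarrow> set x = {1..length x}"
proof
  assume "is_cay x \<and> distinct x"
  then obtain m where "set x = {1..m}" "distinct x" by (auto simp: is_cay_iff_interval)
  then show "set x = {1..length x}" using distinct_card[of x] by simp
next
  assume "set x = {1..length x}"
  then show "is_cay x \<and> distinct x" by (auto simp: is_cay_iff_interval card_distinct)
qed

lemma cay_mem_if_le_last:
  assumes "is_cay v" "v \<noteq> []" "1 \<le> a" "a \<le> last v"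
  shows "a \<in> set v"
proof -
  obtain m where "set v = {1..m}" using assms(1) by (auto simp: is_cay_iff_interval)
  moreover have "last v \<in> set v" using assms(2) by simp
  ultimately show ?thesis using assms(3,4) by auto
qed

lemma asc_snoc: "asc (v @ [a]) = asc v + (if v \<noteq> [] \<and> last v < a then 1 else 0)"
proof -
  have "{i. Suc i < length (v @ [a]) \<and> (v @ [a])!i < (v @ [a])!Suc i} =
        {i. Suc i < length v \<and> v!i < v!Suc i} \<union> (if v \<noteq> [] \<and> last v < a then {length v - 1} else {})"
    (is "?L = ?R \<union> ?E")
    by (cases v rule: rev_cases) (auto simp: nth_append less_Suc_eq)
  moreover have "finite ?R" by (rule finite_subset[of _ "{..<length v}"]) auto
  ultimately show ?thesis unfolding asc_def by (simp add: card_Un_disjoint)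
qed

lemma asc_map:
  assumes "strict_mono_on (set v) f"
  shows "asc (map f v) = asc v"
proof -
  have "{i. Suc i < length v \<and> map f v!i < map f v!Suc i} = {i. Suc i < length v \<and> v!i < v!Suc i}"
    using strict_mono_on_less[OF assms] by auto
  then show ?thesis by (simp add: asc_def)
qed

lemma ascent_tops_new_map:
  assumes "strict_mono_on (set v) f"
  shows "ascent_tops_new (map f v) \<longleftrightarrow> ascent_tops_new v"
proof -
  have "f (v!Suc i) \<in> f ` set (take (Suc i) v) \<longleftrightarrow> v!Suc i \<in> set (take (Suc i) v)"
    if "Suc i < length v" for i
    using that strict_mono_on_eq[OF assms] set_take_subset[of "Suc i" v] by fastforce
  then show ?thesis
    using strict_mono_on_less[OF assms] unfolding ascent_tops_new_def by (auto simp: take_map)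
qed

lemma card_set_ascent_tops_new:
  "ascent_tops_new x \<Longrightarrow> x \<noteq> [] \<Longrightarrow> card (set x) = asc x + 1"
proof (induction x rule: rev_induct)
  case (snoc a v)
  show ?case
  proof (cases "v = []")
    case True
    then show ?thesis by (simp add: asc_def)
  next
    case False
    with snoc show ?thesis by (auto simp: asc_snoc ascent_tops_new_snoc insert_absorb)
  qed
qed simp

lemma last_le_Suc_asc:
  assumes "is_cay v" "ascent_tops_new v" "v \<noteq> []"
  shows "last v \<le> asc v + 1"
proof -
  obtain m where m: "set v = {1..m}" using assms(1) by (auto simp: is_cay_iff_interval)
  then have "m = asc v + 1" using card_set_ascent_tops_new[OF assms(2,3)] by simp
  moreover have "last v \<in> set v" using assms(3) by simp
  ultimately show ?thesis using m by simp
qed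

section \<open>Modified ascent sequences\<close>

definition incr_from :: "nat \<Rightarrow> nat \<Rightarrow> nat" where
  "incr_from a c = (if a \<le> c then c + 1 else c)"

definition decr_from :: "nat \<Rightarrow> nat \<Rightarrow> nat" where
  "decr_from a c = (if a < c then c - 1 else c)"

lemma strict_mono_on_incr_from: "strict_mono_on A (incr_from a)"
  by (auto simp: strict_mono_on_def incr_from_def)

lemma strict_mono_on_decr_from:
  assumes "a \<notin> A"
  shows "strict_mono_on A (decr_from a)"
proof (rule strict_mono_onI)
  fix r s assume "r \<in> A" "s \<in> A" "r < s"
  with assms have "r \<noteq> a" by auto
  with \<open>r < s\<close> show "decr_from a r < decr_from a s" by (auto simp: decr_from_def)
qed

lemma incr_from_neq [simp]: "incr_from a c \<noteq> a" "a \<noteq> incr_from a c"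
  by (simp_all add: incr_from_def)

lemma decr_incr_from [simp]: "decr_from a (incr_from a c) = c"
  by (simp add: incr_from_def decr_from_def)

lemma incr_decr_from: "c \<noteq> a \<Longrightarrow> incr_from a (decr_from a c) = c"
  by (auto simp: incr_from_def decr_from_def)

lemma image_incr_from_atLeastAtMost:
  assumes "1 \<le> a" "a \<le> Suc m"
  shows "incr_from a ` {1..m} = {1..Suc m} - {a}"
proof (rule set_eqI)
  fix c
  have "c \<in> incr_from a ` {1..m}" if "c \<in> {1..Suc m} - {a}"
    using that assms by (intro image_eqI[of c _ "decr_from a c"]) (auto simp: incr_from_def decr_from_def)
  then show "c \<in> incr_from a ` {1..m} \<longleftrightarrow> c \<in> {1..Suc m} - {a}"
    using assms by (auto simp: incr_from_def)
qed

definition modasc_child :: "nat list \<Rightarrow> nat \<Rightarrow> nat list" where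
  "modasc_child v a = (if a \<le> last v then v @ [a] else map (incr_from a) v @ [a])"

definition modasc_parent :: "nat list \<Rightarrow> nat list" where
  "modasc_parent x =
     (if last x \<in> set (butlast x) then butlast x else map (decr_from (last x)) (butlast x))"

definition modasc_label :: "nat list \<Rightarrow> nat \<times> nat" where
  "modasc_label x = (last x, asc x + 2)"

lemma modasc_modasc_child:
  assumes "modasc v" "v \<noteq> []" "1 \<le> a" "a \<le> asc v + 2"
  shows "modasc (modasc_child v a)"
  using assms modasc.app_le[of v a] modasc.app_gt[of v a]
  by (auto simp: modasc_child_def incr_from_def[abs_def])

lemma cay_ascent_tops_new_modasc_child:
  assumes cay: "is_cay v" and new: "ascent_tops_new v" and "v \<noteq> []" "1 \<le> a" "a \<le> asc v + 2"
  shows "is_cay (modasc_child v a) \<and> ascent_tops_new (modasc_child v a)"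
proof -
  obtain m where m: "set v = {1..m}" using cay by (auto simp: is_cay_iff_interval)
  have m_asc: "m = asc v + 1" using m card_set_ascent_tops_new[OF new \<open>v \<noteq> []\<close>] by simp
  show ?thesis
  proof (cases "a \<le> last v")
    case True
    then have "a \<in> set v" using cay_mem_if_le_last cay \<open>v \<noteq> []\<close> \<open>1 \<le> a\<close> by blast
    then show ?thesis using True cay new by (simp add: modasc_child_def ascent_tops_new_snoc is_cay_snoc_mem)
  next
    case False
    have "set (map (incr_from a) v @ [a]) = insert a (incr_from a ` {1..m})"
      using m by simp
    also have "\<dots> = insert a ({1..Suc m} - {a})"
      using image_incr_from_atLeastAtMost[of a m] assms(4,5) m_asc by simp
    also have "\<dots> = {1..Suc m}" using assms(4,5) m_asc by auto
    finally have "is_cay (map (incr_from a) v @ [a])" by (auto simp: is_cay_iff_interval)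
    moreover have "last (map (incr_from a) v) < a"
      using False \<open>v \<noteq> []\<close> by (simp add: last_map incr_from_def)
    moreover have "ascent_tops_new (map (incr_from a) v)"
      using new by (simp add: ascent_tops_new_map strict_mono_on_incr_from)
    ultimately show ?thesis
      using False \<open>v \<noteq> []\<close> by (auto simp: modasc_child_def ascent_tops_new_snoc)
  qed
qed

lemma modasc_imp_cay_ascent_tops_new: "modasc x \<Longrightarrow> is_cay x \<and> ascent_tops_new x"
proof (induction rule: modasc.induct)
  case (app_le v a)
  then have "a \<le> asc v + 2" using last_le_Suc_asc[of v] by simp
  with app_le cay_ascent_tops_new_modasc_child[of v a] show ?case
    by (simp add: modasc_child_def)
next
  case (app_gt v a)
  with cay_ascent_tops_new_modasc_child[of v a] show ?case
    by (simp add: modasc_child_def incr_from_def[abs_def])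
qed (simp_all add: is_cay_def maxl_def)

lemma cay_ascent_tops_new_snoc_fresh:
  assumes cay: "is_cay (v @ [a])" and new: "ascent_tops_new (v @ [a])"
    and fresh: "a \<notin> set v" and "v \<noteq> []"
  defines "w \<equiv> map (decr_from a) v"
  shows "is_cay w \<and> ascent_tops_new w \<and> last w < a \<and> a \<le> asc w + 2 \<and> map (incr_from a) w = v"
proof -
  have new_v: "ascent_tops_new v" and last_v: "last v < a"
    using new fresh \<open>v \<noteq> []\<close> by (auto simp: ascent_tops_new_snoc)
  have mono: "strict_mono_on (set v) (decr_from a)"
    using fresh by (rule strict_mono_on_decr_from)
  obtain M where M: "set (v @ [a]) = {1..M}" using cay by (auto simp: is_cay_iff_interval)
  have a_M: "a \<in> {1..M}" using M by auto
  then obtain m where m: "M = Suc m" by (cases M) auto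
  with a_M have a: "1 \<le> a" "a \<le> Suc m" by auto
  have "Suc m = asc v + 2"
    using card_set_ascent_tops_new[OF new] M m last_v \<open>v \<noteq> []\<close> by (simp add: asc_snoc)
  moreover have "asc w = asc v" unfolding w_def using mono by (rule asc_map)
  moreover have "set w = {1..m}"
  proof -
    have "set v = incr_from a ` {1..m}"
      using M m fresh image_incr_from_atLeastAtMost[OF a] by auto
    then show ?thesis by (simp add: w_def image_image)
  qed
  moreover have "ascent_tops_new w" unfolding w_def using mono new_v by (simp add: ascent_tops_new_map)
  moreover have "last w < a" using last_v \<open>v \<noteq> []\<close> by (simp add: w_def last_map decr_from_def)
  moreover have "map (incr_from a) w = v"
  proof -
    have "incr_from a (decr_from a c) = c" if "c \<in> set v" for c
      using that fresh by (intro incr_decr_from) auto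
    then show ?thesis by (simp add: w_def map_idI)
  qed
  ultimately show ?thesis using a by (auto simp: is_cay_iff_interval)
qed

lemma modasc_parent_props:
  assumes cay: "is_cay x" and new: "ascent_tops_new x" and len: "2 \<le> length x"
  shows "is_cay (modasc_parent x) \<and> ascent_tops_new (modasc_parent x)
    \<and> length (modasc_parent x) = length x - 1 \<and> 1 \<le> last x \<and> last x \<le> asc (modasc_parent x) + 2
    \<and> modasc_child (modasc_parent x) (last x) = x"
proof -
  obtain v a where x: "x = v @ [a]" and "v \<noteq> []"
    using len by (cases x rule: rev_cases) (auto simp: Suc_le_eq)
  have "1 \<le> a" using cay by (auto simp: x is_cay_iff_interval)
  show ?thesis
  proof (cases "a \<in> set v")
    case True
    then have "is_cay v" "ascent_tops_new v" "a \<le> last v"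
      using cay new \<open>v \<noteq> []\<close> by (auto simp: x is_cay_snoc_mem ascent_tops_new_snoc)
    moreover from calculation have "a \<le> asc v + 2"
      using last_le_Suc_asc[of v] \<open>v \<noteq> []\<close> by simp
    ultimately show ?thesis
      using True \<open>1 \<le> a\<close> by (simp add: x modasc_parent_def modasc_child_def)
  next
    case False
    with cay_ascent_tops_new_snoc_fresh[of v a] cay new \<open>v \<noteq> []\<close> \<open>1 \<le> a\<close> show ?thesis
      by (auto simp: x modasc_parent_def modasc_child_def)
  qed
qed

lemma modasc_parent_child:
  assumes "is_cay v" "v \<noteq> []" "1 \<le> a"
  shows "modasc_parent (modasc_child v a) = v"
proof (cases "a \<le> last v")
  case True
  then have "a \<in> set v" using cay_mem_if_le_last assms by blast
  with True show ?thesis by (simp add: modasc_parent_def modasc_child_def)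
next
  case False
  have "map (decr_from a) (map (incr_from a) v) = v" by (simp add: map_idI)
  with False show ?thesis by (auto simp: modasc_parent_def modasc_child_def)
qed

lemma modasc_label_child:
  assumes "v \<noteq> []"
  shows "modasc_label (modasc_child v a) = (a, if a \<le> last v then asc v + 2 else asc v + 3)"
  using assms by (simp add: modasc_label_def modasc_child_def asc_snoc asc_map strict_mono_on_incr_from
      last_map incr_from_def)

lemma cay_ascent_tops_new_imp_modasc: "is_cay x \<Longrightarrow> ascent_tops_new x \<Longrightarrow> modasc x"
proof (induction "length x" arbitrary: x rule: less_induct)
  case less
  consider "x = []" | "x = [1]" | "2 \<le> length x"
    using less.prems(1) by (cases x; cases "tl x") auto
  then show ?case
  proof cases
    case 3
    note parent = modasc_parent_props[OF less.prems 3]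
    then have "modasc (modasc_parent x)" using 3 by (intro less.hyps) auto
    with parent have "modasc (modasc_child (modasc_parent x) (last x))"
      using 3 by (intro modasc_modasc_child) auto
    with parent show ?thesis by simp
  qed (simp_all add: modasc.empty modasc.one[unfolded One_nat_def])
qed

theorem modasc_iff_avoids: "modasc x \<longleftrightarrow> is_cay x \<and> \<not> contains_a x \<and> \<not> contains_b x"
  using modasc_imp_cay_ascent_tops_new cay_ascent_tops_new_imp_modasc ascent_tops_new_iff_avoids
  by blast

section \<open>Generating trees\<close>

definition generating_tree ::
    "('l \<Rightarrow> 'l set) \<Rightarrow> nat \<Rightarrow> (nat \<Rightarrow> 'a set) \<Rightarrow> ('a \<Rightarrow> 'a) \<Rightarrow> ('a \<Rightarrow> 'l) \<Rightarrow> bool" where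
  "generating_tree rule k A parent label \<longleftrightarrow>
     (\<forall>n\<ge>k. finite (A n) \<and> parent ` A (Suc n) \<subseteq> A n \<and>
        (\<forall>y\<in>A n. bij_betw label {x \<in> A (Suc n). parent x = y} (rule (label y))))"

lemma generating_tree_card_label_Suc:
  assumes "generating_tree rule k A parent label" "k \<le> n"
  shows "card {x \<in> A (Suc n). label x = L} = card {y \<in> A n. L \<in> rule (label y)}"
proof -
  from assms have fibre: "\<And>y. y \<in> A n \<Longrightarrow> bij_betw label {x \<in> A (Suc n). parent x = y} (rule (label y))"
    and parent: "\<And>x. x \<in> A (Suc n) \<Longrightarrow> parent x \<in> A n"
    unfolding generating_tree_def by auto
  have "bij_betw parent {x \<in> A (Suc n). label x = L} {y \<in> A n. L \<in> rule (label y)}"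
  proof (rule bij_betw_imageI)
    show "inj_on parent {x \<in> A (Suc n). label x = L}"
    proof (rule inj_onI)
      fix x x' assume "x \<in> {x \<in> A (Suc n). label x = L}" "x' \<in> {x \<in> A (Suc n). label x = L}"
        and "parent x = parent x'"
      with fibre[OF parent, of x] show "x = x'" by (auto simp: bij_betw_def dest: inj_onD)
    qed
    show "parent ` {x \<in> A (Suc n). label x = L} = {y \<in> A n. L \<in> rule (label y)}"
    proof (intro equalityI subsetI)
      fix y assume "y \<in> parent ` {x \<in> A (Suc n). label x = L}"
      with fibre[OF parent] parent show "y \<in> {y \<in> A n. L \<in> rule (label y)}"
        by (force simp: bij_betw_def)
    next
      fix y assume "y \<in> {y \<in> A n. L \<in> rule (label y)}"
      with fibre[of y] show "y \<in> parent ` {x \<in> A (Suc n). label x = L}"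
        by (force simp: bij_betw_def)
    qed
  qed
  then show ?thesis by (rule bij_betw_same_card)
qed

lemma count_image_mset_mset_set:
  "finite A \<Longrightarrow> count (image_mset f (mset_set A)) b = card {x \<in> A. f x = b}"
  by (simp add: count_conv_size_mset filter_mset_image_mset)

lemma generating_tree_label_mset_Suc:
  assumes "generating_tree rule k A parent label" "k \<le> n"
  shows "count (image_mset label (mset_set (A (Suc n)))) L =
    size (filter_mset (\<lambda>L'. L \<in> rule L') (image_mset label (mset_set (A n))))"
proof -
  have "finite (A n)" "finite (A (Suc n))"
    using assms unfolding generating_tree_def by auto
  then show ?thesis
    using generating_tree_card_label_Suc[OF assms]
    by (simp add: count_image_mset_mset_set filter_mset_image_mset)
qed

lemma generating_tree_label_mset_eq:
  assumes A: "generating_tree rule k A parA labA" and B: "generating_tree rule k B parB labB"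
    and root: "image_mset labA (mset_set (A k)) = image_mset labB (mset_set (B k))"
    and "k \<le> n"
  shows "image_mset labA (mset_set (A n)) = image_mset labB (mset_set (B n))"
  using \<open>k \<le> n\<close>
proof (induction n rule: dec_induct)
  case (step n)
  show ?case
    by (rule multiset_eqI)
      (simp add: generating_tree_label_mset_Suc[OF A step(1)] generating_tree_label_mset_Suc[OF B step(1)]
        step.IH)
qed (rule root)

lemma generating_tree_card_eq:
  assumes "generating_tree rule k A parA labA" "generating_tree rule k B parB labB"
    and "image_mset labA (mset_set (A k)) = image_mset labB (mset_set (B k))"
    and "k \<le> n"
  shows "card (A n) = card (B n)"
  using arg_cong[OF generating_tree_label_mset_eq[OF assms], of size] by simp

fun fishburn_rule :: "nat \<times> nat \<Rightarrow> (nat \<times> nat) set" where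
  "fishburn_rule (q, m) = {(j, m) |j. 1 \<le> j \<and> j \<le> q} \<union> {(j, Suc m) |j. q < j \<and> j \<le> m}"

lemma modasc_children:
  assumes "modasc y" "y \<noteq> []"
  shows "{x. modasc x \<and> length x = Suc (length y) \<and> modasc_parent x = y} =
    modasc_child y ` {1..asc y + 2}"
proof (intro equalityI subsetI)
  fix x assume x: "x \<in> {x. modasc x \<and> length x = Suc (length y) \<and> modasc_parent x = y}"
  then have "is_cay x" "ascent_tops_new x" "2 \<le> length x"
    using modasc_imp_cay_ascent_tops_new \<open>y \<noteq> []\<close> by (auto simp: Suc_le_eq)
  from modasc_parent_props[OF this] x show "x \<in> modasc_child y ` {1..asc y + 2}" by force
next
  fix x assume "x \<in> modasc_child y ` {1..asc y + 2}"
  then obtain a where a: "a \<in> {1..asc y + 2}" "x = modasc_child y a" by blast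
  then show "x \<in> {x. modasc x \<and> length x = Suc (length y) \<and> modasc_parent x = y}"
    using assms modasc_modasc_child modasc_parent_child modasc_imp_cay_ascent_tops_new
    by (auto simp: modasc_child_def)
qed

lemma modasc_label_children:
  assumes "modasc y" "y \<noteq> []"
  shows "bij_betw modasc_label (modasc_child y ` {1..asc y + 2}) (fishburn_rule (modasc_label y))"
proof (rule bij_betw_imageI)
  show "inj_on modasc_label (modasc_child y ` {1..asc y + 2})"
    using \<open>y \<noteq> []\<close> by (auto simp: inj_on_def modasc_label_child)
  have "last y \<le> asc y + 1"
    using assms modasc_imp_cay_ascent_tops_new last_le_Suc_asc by blast
  have "modasc_label ` modasc_child y ` {1..asc y + 2} =
      (\<lambda>a. (a, if a \<le> last y then asc y + 2 else asc y + 3)) ` {1..asc y + 2}"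
    using \<open>y \<noteq> []\<close> by (simp add: image_image modasc_label_child)
  also have "\<dots> = fishburn_rule (last y, asc y + 2)"
    using \<open>last y \<le> asc y + 1\<close> by (auto simp: image_iff split: if_splits)
  finally show "modasc_label ` modasc_child y ` {1..asc y + 2} = fishburn_rule (modasc_label y)"
    by (simp add: modasc_label_def)
qed

lemma modasc_generating_tree:
  "generating_tree fishburn_rule 1 (\<lambda>n. {x. modasc x \<and> length x = n}) modasc_parent modasc_label"
  unfolding generating_tree_def
proof (intro allI impI conjI ballI)
  fix n :: nat assume "1 \<le> n"
  show "finite {x. modasc x \<and> length x = n}"
    by (rule finite_subset[OF _ finite_cay_length[of n]]) (auto dest: modasc_imp_cay_ascent_tops_new)
  show "modasc_parent ` {x. modasc x \<and> length x = Suc n} \<subseteq> {x. modasc x \<and> length x = n}"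
  proof clarify
    fix x assume "modasc x" "length x = Suc n"
    then have "is_cay x" "ascent_tops_new x" "2 \<le> length x"
      using modasc_imp_cay_ascent_tops_new \<open>1 \<le> n\<close> by auto
    with modasc_parent_props[OF this] cay_ascent_tops_new_imp_modasc \<open>length x = Suc n\<close>
    show "modasc (modasc_parent x) \<and> length (modasc_parent x) = n" by simp
  qed
  fix y assume "y \<in> {x. modasc x \<and> length x = n}"
  then have y: "modasc y" "y \<noteq> []" "n = length y" using \<open>1 \<le> n\<close> by auto
  show "bij_betw modasc_label {x \<in> {x. modasc x \<and> length x = Suc n}. modasc_parent x = y}
      (fishburn_rule (modasc_label y))"
    using modasc_label_children[OF y(1,2)] modasc_children[OF y(1,2)] y(3) by simp
qed

section \<open>Fishburn permutations\<close>

definition insert_at :: "nat \<Rightarrow> nat \<Rightarrow> nat list \<Rightarrow> nat list" where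
  "insert_at s N xs = take s xs @ N # drop s xs"

(* Site s is the gap in front of position s (site 0 is the front, site length xs the end).  It is
   active when inserting a new maximum there creates no occurrence of f, i.e. when the value one
   below its left neighbour does not occur to its right. *)
definition active_sites :: "nat list \<Rightarrow> nat set" where
  "active_sites xs =
     {s. s \<le> length xs \<and> (s = 0 \<or> (\<forall>k. s \<le> k \<longrightarrow> k < length xs \<longrightarrow> xs!k + 1 \<noteq> xs!(s - 1)))}"

lemma length_insert_at [simp]: "s \<le> length xs \<Longrightarrow> length (insert_at s N xs) = Suc (length xs)"
  by (simp add: insert_at_def)

lemma set_insert_at [simp]: "set (insert_at s N xs) = insert N (set xs)"
  by (metis insert_at_def append_take_drop_id set_append list.set(2) Un_insert_right Un_commute
      insert_commute)

lemma nth_insert_at: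
  "s \<le> length xs \<Longrightarrow> insert_at s N xs ! k = (if k < s then xs!k else if k = s then N else xs!(k - 1))"
  by (auto simp: insert_at_def nth_append min_def nth_Cons' not_less)

lemma active_sites_le_length: "s \<in> active_sites xs \<Longrightarrow> s \<le> length xs"
  by (simp add: active_sites_def)

lemma finite_active_sites: "finite (active_sites xs)"
  by (rule finite_subset[of _ "{..length xs}"]) (auto simp: active_sites_def)

lemma zero_in_active_sites: "0 \<in> active_sites xs"
  by (simp add: active_sites_def)

lemma contains_f_insert_at_max_imp:
  assumes s: "s \<le> length xs" and max: "\<forall>c\<in>set xs. c < N"
    and "contains_f (insert_at s N xs)"
  shows "contains_f xs \<or> s \<notin> active_sites xs"
proof -
  let ?p = "insert_at s N xs"
  have le_N: "?p!k \<le> N" if "k < Suc (length xs)" for k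
    using that s max by (auto simp: nth_insert_at less_imp_le)
  obtain i k where ik: "Suc i < k" "k < Suc (length xs)" "?p!i < ?p!Suc i" "?p!k + 1 = ?p!i"
    using assms(3) s unfolding contains_f_def by auto
  have "i \<noteq> s" using ik le_N[of "Suc i"] s by (auto simp: nth_insert_at)
  have "k \<noteq> s" using ik le_N[of i] s by (auto simp: nth_insert_at)
  consider "Suc i = s" | "s < i" | "Suc i < s" "k < s" | "Suc i < s" "s < k"
    using \<open>i \<noteq> s\<close> \<open>k \<noteq> s\<close> by linarith
  then show ?thesis
  proof cases
    case 1
    then have "s \<notin> active_sites xs" using ik s unfolding active_sites_def
      by (auto simp: nth_insert_at intro!: exI[of _ "k - 1"])
    then show ?thesis ..
  next
    case 2
    then have "contains_f xs" unfolding contains_f_def using ik s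
      by (intro exI[of _ "i - 1"] exI[of _ "k - 1"]) (auto simp: nth_insert_at)
    then show ?thesis ..
  next
    case 3
    then have "contains_f xs" unfolding contains_f_def using ik s
      by (intro exI[of _ i] exI[of _ k]) (auto simp: nth_insert_at)
    then show ?thesis ..
  next
    case 4
    then have "contains_f xs" unfolding contains_f_def using ik s
      by (intro exI[of _ i] exI[of _ "k - 1"]) (auto simp: nth_insert_at)
    then show ?thesis ..
  qed
qed

lemma contains_f_insert_at_max_if:
  assumes s: "s \<le> length xs" and max: "\<forall>c\<in>set xs. c < N"
    and "contains_f xs \<or> s \<notin> active_sites xs"
  shows "contains_f (insert_at s N xs)"
  using assms(3)
proof
  assume "contains_f xs"
  then obtain i k where ik: "Suc i < k" "k < length xs" "xs!i < xs!Suc i" "xs!k + 1 = xs!i"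
    unfolding contains_f_def by auto
  have "xs!i < N" using max ik by simp
  consider "s \<le> i" | "s = Suc i" | "Suc i < s" "k < s" | "Suc i < s" "s \<le> k"
    by linarith
  then show ?thesis
  proof cases
    case 1
    then show ?thesis unfolding contains_f_def using ik s
      by (intro exI[of _ "Suc i"] exI[of _ "Suc k"]) (auto simp: nth_insert_at)
  next
    case 2
    then show ?thesis unfolding contains_f_def using ik s \<open>xs!i < N\<close>
      by (intro exI[of _ i] exI[of _ "Suc k"]) (auto simp: nth_insert_at)
  next
    case 3
    then show ?thesis unfolding contains_f_def using ik s
      by (intro exI[of _ i] exI[of _ k]) (auto simp: nth_insert_at)
  next
    case 4
    then show ?thesis unfolding contains_f_def using ik s
      by (intro exI[of _ i] exI[of _ "Suc k"]) (auto simp: nth_insert_at)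
  qed
next
  assume "s \<notin> active_sites xs"
  then obtain k where k: "0 < s" "s \<le> k" "k < length xs" "xs!k + 1 = xs!(s - 1)"
    using s unfolding active_sites_def by auto
  then have "xs!(s - 1) < N" using max by simp
  with k s show ?thesis
    unfolding contains_f_def by (intro exI[of _ "s - 1"] exI[of _ "Suc k"]) (auto simp: nth_insert_at)
qed

lemma contains_f_insert_at_max:
  assumes "s \<le> length xs" "\<forall>c\<in>set xs. c < N"
  shows "contains_f (insert_at s N xs) \<longleftrightarrow> contains_f xs \<or> s \<notin> active_sites xs"
  using contains_f_insert_at_max_imp[OF assms] contains_f_insert_at_max_if[OF assms] by blast

lemma active_sites_insert_at_le:
  assumes s: "s \<le> length xs" and max: "\<forall>c\<in>set xs. c < N" and "s' \<le> s"
  shows "s' \<in> active_sites (insert_at s N xs) \<longleftrightarrow> s' \<in> active_sites xs"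
proof (cases "s' = 0")
  case False
  let ?p = "insert_at s N xs"
  have left: "?p!(s' - 1) = xs!(s' - 1)" "xs!(s' - 1) < N"
    using s max \<open>s' \<le> s\<close> False by (auto simp: nth_insert_at)
  have "(\<exists>k. s' \<le> k \<and> k < length ?p \<and> ?p!k + 1 = ?p!(s' - 1)) \<longleftrightarrow>
        (\<exists>k. s' \<le> k \<and> k < length xs \<and> xs!k + 1 = xs!(s' - 1))"
  proof
    assume "\<exists>k. s' \<le> k \<and> k < length ?p \<and> ?p!k + 1 = ?p!(s' - 1)"
    then obtain k where k: "s' \<le> k" "k < Suc (length xs)" "?p!k + 1 = xs!(s' - 1)"
      using left s by auto
    then have "k \<noteq> s" using left s by (auto simp: nth_insert_at)
    show "\<exists>k. s' \<le> k \<and> k < length xs \<and> xs!k + 1 = xs!(s' - 1)"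
    proof (cases "k < s")
      case True
      with k s show ?thesis by (auto simp: nth_insert_at)
    next
      case False
      with k s \<open>k \<noteq> s\<close> \<open>s' \<le> s\<close> show ?thesis
        by (auto simp: nth_insert_at intro!: exI[of _ "k - 1"])
    qed
  next
    assume "\<exists>k. s' \<le> k \<and> k < length xs \<and> xs!k + 1 = xs!(s' - 1)"
    then obtain k where k: "s' \<le> k" "k < length xs" "xs!k + 1 = xs!(s' - 1)" by auto
    show "\<exists>k. s' \<le> k \<and> k < length ?p \<and> ?p!k + 1 = ?p!(s' - 1)"
    proof (cases "k < s")
      case True
      with k s left show ?thesis by (auto simp: nth_insert_at intro!: exI[of _ k])
    next
      case False
      with k s left show ?thesis by (auto simp: nth_insert_at intro!: exI[of _ "Suc k"])
    qed
  qed
  then show ?thesis using s \<open>s' \<le> s\<close> False unfolding active_sites_def by auto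
qed (simp add: zero_in_active_sites)

lemma active_sites_insert_at_Suc:
  assumes s: "s \<le> length xs"
  shows "Suc s \<in> active_sites (insert_at s N xs) \<longleftrightarrow>
    (\<forall>k. s \<le> k \<longrightarrow> k < length xs \<longrightarrow> xs!k + 1 \<noteq> N)"
proof -
  have "(\<exists>k. Suc s \<le> k \<and> k < Suc (length xs) \<and> insert_at s N xs ! k + 1 = N) \<longleftrightarrow>
        (\<exists>k. s \<le> k \<and> k < length xs \<and> xs!k + 1 = N)"
  proof
    assume "\<exists>k. Suc s \<le> k \<and> k < Suc (length xs) \<and> insert_at s N xs ! k + 1 = N"
    then obtain k where "Suc s \<le> k" "k < Suc (length xs)" "insert_at s N xs ! k + 1 = N" by blast
    with s show "\<exists>k. s \<le> k \<and> k < length xs \<and> xs!k + 1 = N"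
      by (auto simp: nth_insert_at intro!: exI[of _ "k - 1"])
  next
    assume "\<exists>k. s \<le> k \<and> k < length xs \<and> xs!k + 1 = N"
    then obtain k where "s \<le> k" "k < length xs" "xs!k + 1 = N" by blast
    with s show "\<exists>k. Suc s \<le> k \<and> k < Suc (length xs) \<and> insert_at s N xs ! k + 1 = N"
      by (auto simp: nth_insert_at intro!: exI[of _ "Suc k"])
  qed
  then show ?thesis using s unfolding active_sites_def by (auto simp: nth_insert_at)
qed

lemma active_sites_insert_at_gt:
  assumes s: "s \<le> length xs" and "s < s'"
  shows "Suc s' \<in> active_sites (insert_at s N xs) \<longleftrightarrow> s' \<in> active_sites xs"
proof (cases "s' \<le> length xs")
  case True
  let ?p = "insert_at s N xs"
  have left: "?p!s' = xs!(s' - 1)" using s \<open>s < s'\<close> True by (simp add: nth_insert_at)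
  have "(\<exists>k. Suc s' \<le> k \<and> k < length ?p \<and> ?p!k + 1 = ?p!s') \<longleftrightarrow>
        (\<exists>k. s' \<le> k \<and> k < length xs \<and> xs!k + 1 = xs!(s' - 1))"
  proof
    assume "\<exists>k. Suc s' \<le> k \<and> k < length ?p \<and> ?p!k + 1 = ?p!s'"
    then obtain k where "Suc s' \<le> k" "k < Suc (length xs)" "?p!k + 1 = xs!(s' - 1)"
      using left s by auto
    with s \<open>s < s'\<close> show "\<exists>k. s' \<le> k \<and> k < length xs \<and> xs!k + 1 = xs!(s' - 1)"
      by (auto simp: nth_insert_at intro!: exI[of _ "k - 1"])
  next
    assume "\<exists>k. s' \<le> k \<and> k < length xs \<and> xs!k + 1 = xs!(s' - 1)"
    then obtain k where "s' \<le> k" "k < length xs" "xs!k + 1 = xs!(s' - 1)" by auto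
    with s \<open>s < s'\<close> left show "\<exists>k. Suc s' \<le> k \<and> k < length ?p \<and> ?p!k + 1 = ?p!s'"
      by (auto simp: nth_insert_at intro!: exI[of _ "Suc k"])
  qed
  then show ?thesis using s \<open>s < s'\<close> True unfolding active_sites_def by auto
qed (use s in \<open>simp add: active_sites_def\<close>)

lemma active_sites_insert_at:
  assumes s: "s \<le> length xs" and max: "\<forall>c\<in>set xs. c < N"
  shows "active_sites (insert_at s N xs) =
    {s' \<in> active_sites xs. s' \<le> s}
    \<union> (if \<forall>k. s \<le> k \<longrightarrow> k < length xs \<longrightarrow> xs!k + 1 \<noteq> N then {Suc s} else {})
    \<union> Suc ` {s' \<in> active_sites xs. s < s'}"
proof (rule set_eqI)
  fix s'
  consider "s' \<le> s" | "s' = Suc s" | s'' where "s' = Suc s''" "s < s''"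
    by (metis Suc_lessI not_le_imp_less lessE)
  then show "s' \<in> active_sites (insert_at s N xs) \<longleftrightarrow> s' \<in>
    {s' \<in> active_sites xs. s' \<le> s}
    \<union> (if \<forall>k. s \<le> k \<longrightarrow> k < length xs \<longrightarrow> xs!k + 1 \<noteq> N then {Suc s} else {})
    \<union> Suc ` {s' \<in> active_sites xs. s < s'}"
  proof cases
    case 1
    then show ?thesis using active_sites_insert_at_le[OF s max 1] by auto
  next
    case 2
    then show ?thesis using active_sites_insert_at_Suc[OF s, of N] by auto
  next
    case 3
    then show ?thesis using active_sites_insert_at_gt[OF s \<open>s < s''\<close>, of N] by auto
  qed
qed

lemma card_active_sites_insert_at:
  assumes "s \<le> length xs" "\<forall>c\<in>set xs. c < N"
  shows "card (active_sites (insert_at s N xs)) = card (active_sites xs) +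
    (if \<forall>k. s \<le> k \<longrightarrow> k < length xs \<longrightarrow> xs!k + 1 \<noteq> N then 1 else 0)"
proof -
  let ?L = "{s' \<in> active_sites xs. s' \<le> s}" and ?R = "{s' \<in> active_sites xs. s < s'}"
    and ?E = "if \<forall>k. s \<le> k \<longrightarrow> k < length xs \<longrightarrow> xs!k + 1 \<noteq> N then {Suc s} else {}"
  have fin: "finite ?L" "finite ?R" "finite ?E" using finite_active_sites by auto
  have "active_sites xs = ?L \<union> ?R" by auto
  also have "card \<dots> = card ?L + card ?R" by (intro card_Un_disjoint fin) auto
  finally have "card (active_sites xs) = card ?L + card ?R" .
  moreover have "card (?L \<union> ?E \<union> Suc ` ?R) = card (?L \<union> ?E) + card (Suc ` ?R)"
    by (intro card_Un_disjoint) (use fin in auto)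
  moreover have "card (?L \<union> ?E) = card ?L + card ?E"
    by (intro card_Un_disjoint) (use fin in auto)
  moreover have "card (Suc ` ?R) = card ?R" by (simp add: card_image)
  ultimately show ?thesis unfolding active_sites_insert_at[OF assms] by simp
qed

definition rank_in :: "nat set \<Rightarrow> nat \<Rightarrow> nat" where
  "rank_in S s = card {s' \<in> S. s' \<le> s}"

lemma rank_in_mono: "finite S \<Longrightarrow> s \<le> s' \<Longrightarrow> rank_in S s \<le> rank_in S s'"
  unfolding rank_in_def by (intro card_mono) auto

lemma rank_in_strict_mono:
  assumes "finite S" "s < s'" "s' \<in> S"
  shows "rank_in S s < rank_in S s'"
proof -
  have "{x \<in> S. x \<le> s} \<subseteq> {x \<in> S. x \<le> s'}" "s' \<in> {x \<in> S. x \<le> s'}"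
    "s' \<notin> {x \<in> S. x \<le> s}" using assms by auto
  then have "{x \<in> S. x \<le> s} \<subset> {x \<in> S. x \<le> s'}" by blast
  then show ?thesis unfolding rank_in_def using assms by (intro psubset_card_mono) auto
qed

lemma rank_in_le_card: "finite S \<Longrightarrow> rank_in S s \<le> card S"
  unfolding rank_in_def by (intro card_mono) auto

lemma rank_in_pos:
  assumes "finite S" "s \<in> S"
  shows "1 \<le> rank_in S s"
proof -
  have "card {s' \<in> S. s' \<le> s} > 0" using assms by (auto simp: card_gt_0_iff)
  then show ?thesis by (simp add: rank_in_def)
qed

lemma bij_betw_rank_in:
  assumes "finite S"
  shows "bij_betw (rank_in S) S {1..card S}"
proof -
  have "inj_on (rank_in S) S"
    using rank_in_strict_mono[OF assms] by (metis inj_onI less_irrefl linorder_neqE_nat)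
  moreover have "rank_in S ` S \<subseteq> {1..card S}"
    using rank_in_pos[OF assms] rank_in_le_card[OF assms] by auto
  ultimately show ?thesis
    by (simp add: bij_betw_def card_subset_eq card_image)
qed

lemma bij_betw_rank_in_fishburn_rule:
  assumes fin: "finite S"
  shows "bij_betw (\<lambda>s. (rank_in S s, if t < s then Suc (card S) else card S)) S
    (fishburn_rule (rank_in S t, card S))"
proof (rule bij_betw_imageI)
  have rank: "bij_betw (rank_in S) S {1..card S}" using fin by (rule bij_betw_rank_in)
  then show "inj_on (\<lambda>s. (rank_in S s, if t < s then Suc (card S) else card S)) S"
    by (auto simp: bij_betw_def inj_on_def)
  have above_t: "t < s \<longleftrightarrow> rank_in S t < rank_in S s" if "s \<in> S" for s
    using rank_in_strict_mono[OF fin _ that] rank_in_mono[OF fin, of s t] by (meson leD not_le)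
  show "(\<lambda>s. (rank_in S s, if t < s then Suc (card S) else card S)) ` S =
      fishburn_rule (rank_in S t, card S)"
  proof (intro equalityI subsetI)
    fix L assume "L \<in> (\<lambda>s. (rank_in S s, if t < s then Suc (card S) else card S)) ` S"
    then obtain s where s: "s \<in> S" "L = (rank_in S s, if t < s then Suc (card S) else card S)"
      by blast
    then have "1 \<le> rank_in S s" "rank_in S s \<le> card S"
      using rank_in_pos[OF fin] rank_in_le_card[OF fin] by auto
    with s above_t[OF s(1)] show "L \<in> fishburn_rule (rank_in S t, card S)"
      by (cases "t < s") auto
  next
    fix L assume L: "L \<in> fishburn_rule (rank_in S t, card S)"
    then obtain j k where jk: "L = (j, k)" "j \<in> {1..card S}"
      using rank_in_le_card[OF fin, of t] by auto
    then have "j \<in> rank_in S ` S" using rank by (simp add: bij_betw_def)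
    then obtain s where s: "s \<in> S" "rank_in S s = j" by blast
    with L jk above_t[OF s(1)] have "L = (rank_in S s, if t < s then Suc (card S) else card S)"
      by auto
    with s show "L \<in> (\<lambda>s. (rank_in S s, if t < s then Suc (card S) else card S)) ` S"
      by blast
  qed
qed

definition fishburn_parent :: "nat list \<Rightarrow> nat list" where
  "fishburn_parent x = removeAll (length x) x"

definition fishburn_label :: "nat list \<Rightarrow> nat \<times> nat" where
  "fishburn_label x = (card {s \<in> active_sites x. length x \<notin> set (take s x)}, card (active_sites x))"

lemma nth_in_set_take_iff:
  assumes "distinct xs" "t < length xs"
  shows "xs!t \<in> set (take s xs) \<longleftrightarrow> t < s"
  using assms by (auto simp: in_set_conv_nth nth_eq_iff_index_eq)

lemma fishburn_label_eq:
  assumes x: "set x = {1..length x}" and t: "t < length x" "x!t = length x"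
  shows "fishburn_label x = (rank_in (active_sites x) t, card (active_sites x))"
proof -
  have "distinct x" using x by (intro card_distinct) simp
  then have "length x \<notin> set (take s x) \<longleftrightarrow> s \<le> t" for s
    using nth_in_set_take_iff[OF _ t(1), of s] t(2) by auto
  then show ?thesis by (simp add: fishburn_label_def rank_in_def)
qed

lemma insert_at_max_child:
  assumes xs: "set xs = {1..n}" "length xs = n" "\<not> contains_f xs" and s: "s \<in> active_sites xs"
  shows "set (insert_at s (Suc n) xs) = {1..Suc n}" "length (insert_at s (Suc n) xs) = Suc n"
    "\<not> contains_f (insert_at s (Suc n) xs)" "fishburn_parent (insert_at s (Suc n) xs) = xs"
proof -
  have "s \<le> length xs" using s by (rule active_sites_le_length)
  then show "set (insert_at s (Suc n) xs) = {1..Suc n}" "length (insert_at s (Suc n) xs) = Suc n"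
    using xs by auto
  show "\<not> contains_f (insert_at s (Suc n) xs)"
    using contains_f_insert_at_max[OF \<open>s \<le> length xs\<close>, of "Suc n"] xs s by auto
  have "Suc n \<notin> set xs" using xs(1) by simp
  then have "Suc n \<notin> set (take s xs)" "Suc n \<notin> set (drop s xs)"
    by (auto dest: in_set_takeD in_set_dropD)
  then show "fishburn_parent (insert_at s (Suc n) xs) = xs"
    using \<open>s \<le> length xs\<close> xs(2) by (simp add: fishburn_parent_def insert_at_def)
qed

lemma fishburn_parent_props:
  assumes p: "set p = {1..Suc n}" "length p = Suc n" "\<not> contains_f p"
  obtains s where "set (fishburn_parent p) = {1..n}" "length (fishburn_parent p) = n"
    "\<not> contains_f (fishburn_parent p)" "s \<in> active_sites (fishburn_parent p)"
    "p = insert_at s (Suc n) (fishburn_parent p)"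
proof -
  have "distinct p" using p by (intro card_distinct) simp
  obtain u w where p_split: "p = u @ Suc n # w" using p(1) split_list[of "Suc n" p] by auto
  with \<open>distinct p\<close> have "Suc n \<notin> set u" "Suc n \<notin> set w" by auto
  with p_split p(2) have parent: "fishburn_parent p = u @ w" by (simp add: fishburn_parent_def)
  have "set (u @ w) = set p - {Suc n}" using p_split \<open>Suc n \<notin> set u\<close> \<open>Suc n \<notin> set w\<close> by auto
  also have "\<dots> = {1..n}" unfolding p(1) by auto
  finally have set_uw: "set (u @ w) = {1..n}" .
  have len_uw: "length (u @ w) = n" using p(2) p_split by simp
  have p_ins: "p = insert_at (length u) (Suc n) (u @ w)"
    using p_split by (simp add: insert_at_def)
  have "\<not> contains_f (u @ w) \<and> length u \<in> active_sites (u @ w)"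
    using contains_f_insert_at_max[of "length u" "u @ w" "Suc n"] set_uw p(3) p_ins by auto
  with set_uw len_uw p_ins show ?thesis using that unfolding parent by blast
qed

lemma fishburn_children:
  assumes xs: "set xs = {1..n}" "length xs = n" "\<not> contains_f xs"
  shows "{p. set p = {1..Suc n} \<and> length p = Suc n \<and> \<not> contains_f p \<and> fishburn_parent p = xs} =
    (\<lambda>s. insert_at s (Suc n) xs) ` active_sites xs"
proof (intro equalityI subsetI)
  fix p assume "p \<in> {p. set p = {1..Suc n} \<and> length p = Suc n \<and> \<not> contains_f p \<and> fishburn_parent p = xs}"
  then have p: "set p = {1..Suc n}" "length p = Suc n" "\<not> contains_f p" "fishburn_parent p = xs"
    by auto
  then obtain s where "s \<in> active_sites xs" "p = insert_at s (Suc n) xs"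
    using fishburn_parent_props[OF p(1-3)] p(4) by blast
  then show "p \<in> (\<lambda>s. insert_at s (Suc n) xs) ` active_sites xs" by blast
qed (use insert_at_max_child[OF xs] in auto)

lemma fishburn_label_child:
  assumes xs: "set xs = {1..n}" "length xs = n" and s: "s \<in> active_sites xs"
    and t: "t < n" "xs!t = n"
  shows "fishburn_label (insert_at s (Suc n) xs) =
    (rank_in (active_sites xs) s, if t < s then Suc (card (active_sites xs)) else card (active_sites xs))"
proof -
  let ?p = "insert_at s (Suc n) xs"
  have "s \<le> n" using active_sites_le_length[OF s] xs(2) by simp
  have max: "\<forall>c\<in>set xs. c < Suc n" using xs by auto
  have "distinct xs" using xs by (intro card_distinct) simp
  have label: "fishburn_label ?p = (rank_in (active_sites ?p) s, card (active_sites ?p))"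
    using xs \<open>s \<le> n\<close> by (intro fishburn_label_eq) (auto simp: nth_insert_at)
  have "{s' \<in> active_sites ?p. s' \<le> s} = {s' \<in> active_sites xs. s' \<le> s}"
    using active_sites_insert_at_le[OF _ max] xs(2) \<open>s \<le> n\<close> by auto
  then have "rank_in (active_sites ?p) s = rank_in (active_sites xs) s" by (simp add: rank_in_def)
  moreover have "(\<exists>k. s \<le> k \<and> k < n \<and> xs!k + 1 = Suc n) \<longleftrightarrow> s \<le> t"
  proof
    assume "\<exists>k. s \<le> k \<and> k < n \<and> xs!k + 1 = Suc n"
    then obtain k where k: "s \<le> k" "k < n" "xs!k = xs!t" using t by auto
    then have "k = t" using nth_eq_iff_index_eq[OF \<open>distinct xs\<close>, of k t] t xs(2) by simp
    with k show "s \<le> t" by simp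
  qed (use t in auto)
  then have "(\<forall>k. s \<le> k \<longrightarrow> k < n \<longrightarrow> xs!k + 1 \<noteq> Suc n) \<longleftrightarrow> t < s"
    using not_le by blast
  then have "card (active_sites ?p) = (if t < s then Suc (card (active_sites xs)) else card (active_sites xs))"
    using card_active_sites_insert_at[OF _ max, of s] xs(2) \<open>s \<le> n\<close> by simp
  ultimately show ?thesis using label by simp
qed

lemma fishburn_label_children:
  assumes xs: "set xs = {1..n}" "length xs = n" and "1 \<le> n"
  shows "bij_betw fishburn_label ((\<lambda>s. insert_at s (Suc n) xs) ` active_sites xs)
    (fishburn_rule (fishburn_label xs))"
proof -
  have "n \<in> set xs" using xs(1) \<open>1 \<le> n\<close> by simp
  then obtain t where t: "t < n" "xs!t = n" using xs(2) by (auto simp: in_set_conv_nth)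
  let ?S = "active_sites xs" and ?child = "\<lambda>s. insert_at s (Suc n) xs"
    and ?R = "fishburn_rule (fishburn_label xs)"
  have "bij_betw (\<lambda>s. (rank_in ?S s, if t < s then Suc (card ?S) else card ?S)) ?S ?R"
    using bij_betw_rank_in_fishburn_rule[OF finite_active_sites] fishburn_label_eq[of xs t] xs t
    by simp
  moreover have "bij_betw (fishburn_label \<circ> ?child) ?S ?R \<longleftrightarrow>
      bij_betw (\<lambda>s. (rank_in ?S s, if t < s then Suc (card ?S) else card ?S)) ?S ?R"
    by (rule bij_betw_cong) (simp add: fishburn_label_child[OF xs _ t])
  ultimately have bij: "bij_betw (fishburn_label \<circ> ?child) ?S ?R" by blast
  show ?thesis
  proof (rule bij_betw_imageI)
    show "inj_on fishburn_label (?child ` ?S)"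
      using bij by (intro inj_on_imageI) (simp add: bij_betw_def)
    show "fishburn_label ` ?child ` ?S = ?R"
      using bij by (simp add: bij_betw_def image_comp)
  qed
qed

lemma fishburn_generating_tree:
  "generating_tree fishburn_rule 1 (\<lambda>n. {x. set x = {1..n} \<and> length x = n \<and> \<not> contains_f x})
    fishburn_parent fishburn_label"
  unfolding generating_tree_def
proof (intro allI impI conjI ballI)
  fix n :: nat assume "1 \<le> n"
  show "finite {x. set x = {1..n} \<and> length x = n \<and> \<not> contains_f x}"
    by (rule finite_subset[OF _ finite_cay_length[of n]]) (auto simp: is_cay_iff_interval)
  show "fishburn_parent ` {x. set x = {1..Suc n} \<and> length x = Suc n \<and> \<not> contains_f x}
      \<subseteq> {x. set x = {1..n} \<and> length x = n \<and> \<not> contains_f x}"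
  proof clarify
    fix p assume p: "set p = {1..Suc n}" "length p = Suc n" "\<not> contains_f p"
    show "set (fishburn_parent p) = {1..n} \<and> length (fishburn_parent p) = n
        \<and> \<not> contains_f (fishburn_parent p)"
      by (rule fishburn_parent_props[OF p]) simp
  qed
  fix xs assume "xs \<in> {x. set x = {1..n} \<and> length x = n \<and> \<not> contains_f x}"
  then have xs: "set xs = {1..n}" "length xs = n" "\<not> contains_f xs" by auto
  have "{x \<in> {x. set x = {1..Suc n} \<and> length x = Suc n \<and> \<not> contains_f x}. fishburn_parent x = xs}
      = (\<lambda>s. insert_at s (Suc n) xs) ` active_sites xs"
    using fishburn_children[OF xs] by auto
  with fishburn_label_children[OF xs(1,2) \<open>1 \<le> n\<close>]
  show "bij_betw fishburn_label
      {x \<in> {x. set x = {1..Suc n} \<and> length x = Suc n \<and> \<not> contains_f x}. fishburn_parent x = xs}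
      (fishburn_rule (fishburn_label xs))"
    by simp
qed

lemma fishburn_level_eq:
  "{x. is_cay x \<and> length x = n \<and> distinct x \<and> \<not> contains_f x} =
    {x. set x = {1..n} \<and> length x = n \<and> \<not> contains_f x}"
  using cay_distinct_iff by blast

lemma modasc_fishburn_root:
  "image_mset modasc_label (mset_set {x. modasc x \<and> length x = 1}) =
   image_mset fishburn_label (mset_set {x. set x = {1..1} \<and> length x = 1 \<and> \<not> contains_f x})"
proof -
  have "{x. modasc x \<and> length x = 1} = {[1]}"
    using modasc.one by (auto simp: length_Suc_conv dest: modasc_imp_cay_ascent_tops_new)
  moreover have "{x. set x = {1..1} \<and> length x = 1 \<and> \<not> contains_f x} = {[1]}"
    by (auto simp: length_Suc_conv contains_f_def)
  moreover have "active_sites [1] = {0, 1}" by (auto simp: active_sites_def)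
  moreover have "{s \<in> {0, 1}. length [1::nat] \<notin> set (take s [1])} = {0}" by auto
  ultimately show ?thesis
    by (simp add: modasc_label_def fishburn_label_def asc_def)
qed

theorem theorem7p3:
  shows "{x. modasc x} = {x. is_cay x \<and> \<not> contains_a x \<and> \<not> contains_b x}
    \<and> (\<forall>n. card {x. is_cay x \<and> length x = n \<and> \<not> contains_a x \<and> \<not> contains_b x}
             = card {x. is_cay x \<and> length x = n \<and> distinct x \<and> \<not> contains_f x})"
proof (intro conjI allI)
  show "{x. modasc x} = {x. is_cay x \<and> \<not> contains_a x \<and> \<not> contains_b x}"
    using modasc_iff_avoids by blast
  fix n
  have "{x. is_cay x \<and> length x = n \<and> \<not> contains_a x \<and> \<not> contains_b x} =
      {x. modasc x \<and> length x = n}"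
    using modasc_iff_avoids by blast
  moreover have "card {x. modasc x \<and> length x = n} =
      card {x. set x = {1..n} \<and> length x = n \<and> \<not> contains_f x}"
  proof (cases "n = 0")
    case True
    have "{x. modasc x \<and> length x = 0} = {[]}"
      "{x. set x = {1..0} \<and> length x = 0 \<and> \<not> contains_f x} = {[]}"
      by (auto simp: modasc.empty contains_f_def)
    with True show ?thesis by simp
  next
    case False
    then show ?thesis
      using generating_tree_card_eq[OF modasc_generating_tree fishburn_generating_tree
          modasc_fishburn_root] by simp
  qed
  ultimately show "card {x. is_cay x \<and> length x = n \<and> \<not> contains_a x \<and> \<not> contains_b x}
      = card {x. is_cay x \<and> length x = n \<and> distinct x \<and> \<not> contains_f x}"
    by (simp add: fishburn_level_eq)
qed

end
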